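(* Let $b>0$ and let $X_1,X_2,\dots$ be independent random variables such that $\mathbb{E}[X_i]=0$, $\mathbb{E}[|X_i|^2]\le\sigma_i^2$ and $X_i\le b$ (almost surely) for $i\in\mathbb{N}$. Define $S_n=\sum_{i=1}^nX_i$, $\nu_n=\frac1n\sum_{i=1}^n\sigma_i^2$, and \[ \mathcal{V}(s,n)=n\ln\Big[\frac{b^2}{b^2+\nu_n}\exp\Big(-\frac{\nu_n}{b}s\Big)+\frac{\nu_n}{b^2+\nu_n}e^{bs}\Big] \] for $n\in\mathbb{N}$. Let $m$ be a positive integer with $\nu_m>0$. Then for $0<\varepsilon<b$, \[ \Pr\Big\{\sup_{n\in\mathbb{N}}\big[\zeta(S_n-m\varepsilon)-\mathcal{V}(\zeta,n)+\mathcal{V}(\zeta,m)\big]\ge0\Big\}\le\Big[\Big(1+\frac{b\varepsilon}{\nu_m}\Big)^{-\frac{\nu_m+b\varepsilon}{b^2+\nu_m}}\Big(1-\frac{\varepsilon}{b}\Big)^{-\frac{b^2-b\varepsilon}{b^2+\nu_m}}\Big]^m, \] where $\zeta=\frac{b}{b^2+\nu_m}\ln\frac{1+\frac{\varepsilon b}{\nu_m}}{1-\frac{\varepsilon}{b}}$.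
   Context: $\mathbb{N}$ denotes the set of positive integers. *)

theory Defs
  imports "HOL-Probability.Probability"
begin

definition nu :: "(nat \<Rightarrow> real) \<Rightarrow> nat \<Rightarrow> real" where
  "nu \<sigma> n = (\<Sum>i=1..n. (\<sigma> i)\<^sup>2) / real n"

definition VV :: "real \<Rightarrow> (nat \<Rightarrow> real) \<Rightarrow> real \<Rightarrow> nat \<Rightarrow> real" where
  "VV b \<sigma> s n = real n * ln (b\<^sup>2 / (b\<^sup>2 + nu \<sigma> n) * exp (- (nu \<sigma> n / b) * s)
                             + nu \<sigma> n / (b\<^sup>2 + nu \<sigma> n) * exp (b * s))"

end

theory Submission
  imports Defs
begin

text \<open>
  Fix \<open>\<zeta> > 0\<close>. Then \<open>\<psi>(v) = bennett_log_mgf b \<zeta> v\<close> is the log-mgf at \<open>\<zeta>\<close> of the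
  two-point law on \<open>{-v/b, b}\<close> with mean 0 and variance \<open>v\<close>, and \<open>VV b \<sigma> \<zeta> n = n \<psi>(\<nu>\<^sub>n)\<close>.
  Bennett's quadratic majorant of \<open>exp (\<zeta> x)\<close> on \<open>x \<le> b\<close> gives
  \<open>E exp (\<zeta> X\<^sub>i) \<le> exp \<psi>(\<sigma>\<^sub>i\<^sup>2)\<close>, and concavity of \<open>\<psi>\<close> gives
  \<open>VV (n+1) - VV n \<ge> \<psi>(\<sigma>\<^sub>n\<^sub>+\<^sub>1\<^sup>2)\<close>. Hence \<open>exp (\<zeta> S\<^sub>n - VV n)\<close> is a running
  product of independent nonnegative factors of mean at most 1, and Ville's maximal inequality
  bounds the probability that it ever reaches \<open>exp (\<zeta> m \<epsilon> - VV m)\<close> by the reciprocal.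
  For the chosen \<open>\<zeta>\<close> this reciprocal is the stated closed form.
\<close>

section \<open>Bennett's bound on the moment generating function\<close>

definition bennett_log_mgf :: "real \<Rightarrow> real \<Rightarrow> real \<Rightarrow> real" where
  "bennett_log_mgf b s v =
     ln (b\<^sup>2 / (b\<^sup>2 + v) * exp (- (v / b) * s) + v / (b\<^sup>2 + v) * exp (b * s))"

lemma VV_eq_bennett_log_mgf: "VV b \<sigma> s n = real n * bennett_log_mgf b s (nu \<sigma> n)"
  by (simp add: VV_def bennett_log_mgf_def)

lemma exp_le_quadratic_of_nonpos:
  fixes x :: real
  assumes "x \<le> 0"
  shows "exp x \<le> 1 + x + x\<^sup>2 / 2"
proof -
  obtain t where t: "exp x = (\<Sum>m<3. x ^ m / fact m) + exp t / fact 3 * x ^ 3"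
    using Maclaurin_exp_le by blast
  have "x ^ 3 = x * x\<^sup>2"
    by (simp add: power2_eq_square power3_eq_cube)
  then have "x ^ 3 \<le> 0"
    using assms by (simp add: mult_nonpos_nonneg)
  then have "exp t / fact 3 * x ^ 3 \<le> 0"
    by (rule mult_nonneg_nonpos[rotated]) simp
  then show ?thesis
    using t by (simp add: numeral_3_eq_3 power2_eq_square)
qed

lemma exp_remainder_div_square_mono:
  fixes w D :: real
  assumes "0 < w" "w \<le> D"
  shows "(exp w - 1 - w) / w\<^sup>2 \<le> (exp D - 1 - D) / D\<^sup>2"
proof (rule DERIV_nonneg_imp_nondecreasing[OF assms(2)])
  have numerator: "0 \<le> (x - 2) * exp x + x + 2" if "0 \<le> x" for x :: real
  proof -
    have "(\<lambda>x. (x - 2) * exp x + x + 2) 0 \<le> (\<lambda>x. (x - 2) * exp x + x + 2) x"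
    proof (rule DERIV_nonneg_imp_nondecreasing[OF that])
      fix y :: real
      have "(1 - y) * exp y \<le> exp (- y) * exp y"
        using exp_ge_add_one_self[of "- y"] by (intro mult_right_mono) auto
      then have "0 \<le> (y - 1) * exp y + 1"
        by (simp add: exp_minus algebra_simps)
      then show "\<exists>d. ((\<lambda>x. (x - 2) * exp x + x + 2) has_real_derivative d) (at y) \<and> 0 \<le> d"
        by (intro exI[of _ "(y - 1) * exp y + 1"]) (auto intro!: derivative_eq_intros simp: algebra_simps)
    qed
    then show ?thesis by simp
  qed
  fix x :: real
  assume "w \<le> x" "x \<le> D"
  with assms have x: "0 < x" by simp
  have "((\<lambda>x. (exp x - 1 - x) / x\<^sup>2) has_real_derivative ((x - 2) * exp x + x + 2) / x ^ 3) (at x)"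
    using x by (auto intro!: derivative_eq_intros simp: power2_eq_square power3_eq_cube field_simps)
  moreover have "0 \<le> ((x - 2) * exp x + x + 2) / x ^ 3"
    using numerator[of x] x by simp
  ultimately show "\<exists>d. ((\<lambda>x. (exp x - 1 - x) / x\<^sup>2) has_real_derivative d) (at x) \<and> 0 \<le> d"
    by blast
qed

lemma exp_le_quadratic:
  fixes w D :: real
  assumes "0 < D" "w \<le> D"
  shows "exp w \<le> 1 + w + w\<^sup>2 * ((exp D - 1 - D) / D\<^sup>2)"
proof (cases "w > 0")
  case True
  have "(exp w - 1 - w) / w\<^sup>2 \<le> (exp D - 1 - D) / D\<^sup>2"
    using exp_remainder_div_square_mono True assms by blast
  with True show ?thesis
    by (simp add: divide_le_eq mult.commute)
next
  case False
  have "1 / 2 \<le> (exp D - 1 - D) / D\<^sup>2"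
    using exp_lower_Taylor_quadratic[of D] assms by (simp add: field_simps)
  then have "w\<^sup>2 * (1 / 2) \<le> w\<^sup>2 * ((exp D - 1 - D) / D\<^sup>2)"
    by (rule mult_left_mono) simp
  then show ?thesis
    using exp_le_quadratic_of_nonpos[of w] False by linarith
qed

text \<open>The majorant is the quadratic tangent to \<open>exp (s x)\<close> at \<open>x = -a\<close> and equal to it at \<open>x = b\<close>;
  its mean under the two-point law is therefore the two-point mgf.\<close>

lemma exp_le_bennett_quadratic:
  fixes b v s x :: real
  assumes "0 < b" "0 \<le> v" "0 < s" "x \<le> b"
  defines "a \<equiv> v / b"
  defines "K \<equiv> (exp (s * (a + b)) - 1 - s * (a + b)) / (s * (a + b))\<^sup>2"
  shows "exp (s * x) \<le> exp (- s * a) * (1 + s * (x + a) + (s * (x + a))\<^sup>2 * K)"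
proof -
  have "0 < s * (a + b)" "s * (x + a) \<le> s * (a + b)"
    using assms by (auto simp: a_def intro!: mult_pos_pos add_nonneg_pos)
  then have "exp (s * (x + a)) \<le> 1 + s * (x + a) + (s * (x + a))\<^sup>2 * K"
    unfolding K_def by (rule exp_le_quadratic)
  then have "exp (- s * a) * exp (s * (x + a)) \<le> exp (- s * a) * (1 + s * (x + a) + (s * (x + a))\<^sup>2 * K)"
    by simp
  also have "exp (- s * a) * exp (s * (x + a)) = exp (s * x)"
    by (simp add: mult_exp_exp algebra_simps)
  finally show ?thesis .
qed

lemma bennett_quadratic_mean:
  fixes b v s :: real
  assumes b: "0 < b" and v: "0 \<le> v" and s: "0 < s"
  defines "a \<equiv> v / b"
  defines "K \<equiv> (exp (s * (a + b)) - 1 - s * (a + b)) / (s * (a + b))\<^sup>2"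
  shows "exp (- s * a) * (1 + s * a + s\<^sup>2 * K * (v + a\<^sup>2)) = exp (bennett_log_mgf b s v)"
proof -
  have a: "0 \<le> a" and v_eq: "v = a * b"
    using b v by (simp_all add: a_def)
  define Z where "Z = exp (s * (a + b))"
  have ab: "0 < a + b"
    using a b by simp
  have "s\<^sup>2 * K = (Z - 1 - s * (a + b)) / (a + b)\<^sup>2"
    using s unfolding K_def Z_def[symmetric] by (simp add: power_mult_distrib)
  moreover have "v + a\<^sup>2 = a * (a + b)"
    unfolding v_eq by (simp add: power2_eq_square algebra_simps)
  ultimately have "s\<^sup>2 * K * (v + a\<^sup>2) = a * (Z - 1 - s * (a + b)) / (a + b)"
    using ab by (simp add: power2_eq_square)
  then have "1 + s * a + s\<^sup>2 * K * (v + a\<^sup>2) = (b + a * Z) / (a + b)"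
    using ab by (simp add: field_simps)
  then have "exp (- s * a) * (1 + s * a + s\<^sup>2 * K * (v + a\<^sup>2))
      = (b * exp (- s * a) + a * (exp (- s * a) * Z)) / (a + b)"
    by (simp add: algebra_simps)
  also have "exp (- s * a) * Z = exp (b * s)"
    by (simp add: Z_def mult_exp_exp algebra_simps)
  also have "(b * exp (- s * a) + a * exp (b * s)) / (a + b)
      = b\<^sup>2 / (b\<^sup>2 + v) * exp (- (v / b) * s) + v / (b\<^sup>2 + v) * exp (b * s)"
  proof -
    have "b\<^sup>2 + v = b * (a + b)"
      unfolding v_eq by (simp add: power2_eq_square algebra_simps)
    then show ?thesis
      using b unfolding v_eq by (simp add: power2_eq_square add_divide_distrib)
  qed
  also have "\<dots> = exp (bennett_log_mgf b s v)"
    unfolding bennett_log_mgf_def using b v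
    by (intro exp_ln[symmetric] add_pos_nonneg) (auto intro!: divide_pos_pos add_pos_nonneg)
  finally show ?thesis .
qed

lemma integral_square_le_of_nn_integral:
  fixes X :: "'a \<Rightarrow> real"
  assumes "X \<in> borel_measurable M" and "(\<integral>\<^sup>+x. ennreal (\<bar>X x\<bar>\<^sup>2) \<partial>M) \<le> ennreal v" and "0 \<le> v"
  shows "integrable M (\<lambda>x. (X x)\<^sup>2)" and "(\<integral>x. (X x)\<^sup>2 \<partial>M) \<le> v"
proof -
  show int: "integrable M (\<lambda>x. (X x)\<^sup>2)"
    using assms by (intro integrableI_bounded) (auto simp: top.not_eq_extremum order.strict_trans1)
  have "ennreal (\<integral>x. (X x)\<^sup>2 \<partial>M) = (\<integral>\<^sup>+x. ennreal (\<bar>X x\<bar>\<^sup>2) \<partial>M)"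
    by (simp add: nn_integral_eq_integral[OF int])
  also have "\<dots> \<le> ennreal v"
    by (rule assms(2))
  finally show "(\<integral>x. (X x)\<^sup>2 \<partial>M) \<le> v"
    using assms(3) by (simp add: ennreal_le_iff)
qed

lemma (in prob_space) nn_integral_exp_le_bennett:
  fixes X :: "'a \<Rightarrow> real" and b v s :: real
  assumes b: "0 < b" and v: "0 \<le> v" and s: "0 < s"
    and X: "integrable M X" and mean: "expectation X = 0" and bounded: "AE x in M. X x \<le> b"
    and var: "(\<integral>\<^sup>+x. ennreal (\<bar>X x\<bar>\<^sup>2) \<partial>M) \<le> ennreal v"
  shows "(\<integral>\<^sup>+x. ennreal (exp (s * X x)) \<partial>M) \<le> ennreal (exp (bennett_log_mgf b s v))"
proof -
  define a where "a = v / b"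
  define K where "K = (exp (s * (a + b)) - 1 - s * (a + b)) / (s * (a + b))\<^sup>2"
  define q where "q x = exp (- s * a) * (1 + s * (x + a) + (s * (x + a))\<^sup>2 * K)" for x
  have "1 + s * (a + b) \<le> exp (s * (a + b))"
    by (rule exp_ge_add_one_self)
  then have K: "0 \<le> K"
    unfolding K_def by (intro divide_nonneg_nonneg) (linarith, simp)
  note X2 = integral_square_le_of_nn_integral[OF borel_measurable_integrable[OF X] var v]
  have q_eq: "q x = exp (- s * a) * (1 + s * a + (s * a)\<^sup>2 * K)
      + exp (- s * a) * (s + 2 * s\<^sup>2 * K * a) * x + exp (- s * a) * s\<^sup>2 * K * x\<^sup>2" for x
    by (simp add: q_def power2_eq_square algebra_simps)
  have q_int: "integrable M (\<lambda>x. q (X x))"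
    unfolding q_eq using X X2 by simp
  have exp_le_q: "AE x in M. exp (s * X x) \<le> q (X x)"
    using bounded by eventually_elim (unfold q_def K_def a_def, erule exp_le_bennett_quadratic[OF b v s])
  have "(\<integral>x. q (X x) \<partial>M) = exp (- s * a) * (1 + s * a + s\<^sup>2 * K * ((\<integral>x. (X x)\<^sup>2 \<partial>M) + a\<^sup>2))"
    unfolding q_eq using X X2 mean by (simp add: prob_space) (simp add: power2_eq_square algebra_simps)
  also have "\<dots> \<le> exp (- s * a) * (1 + s * a + s\<^sup>2 * K * (v + a\<^sup>2))"
    using X2(2) K by (simp add: mult_left_mono)
  also have "\<dots> = exp (bennett_log_mgf b s v)"
    unfolding a_def K_def by (rule bennett_quadratic_mean[OF b v s])
  finally have "(\<integral>x. q (X x) \<partial>M) \<le> exp (bennett_log_mgf b s v)" .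
  have "(\<integral>\<^sup>+x. ennreal (exp (s * X x)) \<partial>M) \<le> (\<integral>\<^sup>+x. ennreal (q (X x)) \<partial>M)"
    using exp_le_q by (intro nn_integral_mono_AE) (auto elim: eventually_mono intro: ennreal_leI)
  also have "\<dots> = ennreal (\<integral>x. q (X x) \<partial>M)"
    using exp_le_q by (intro nn_integral_eq_integral[OF q_int]) (auto elim: eventually_mono intro: order_trans[OF less_imp_le[OF exp_gt_zero]])
  also have "\<dots> \<le> ennreal (exp (bennett_log_mgf b s v))"
    using \<open>(\<integral>x. q (X x) \<partial>M) \<le> exp (bennett_log_mgf b s v)\<close> by (rule ennreal_leI)
  finally show ?thesis .
qed

section \<open>Concavity of the Bennett exponent in the variance\<close>

lemma bennett_log_mgf_eq:
  fixes b s v :: real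
  assumes b: "0 < b" and v: "0 \<le> v"
  shows "bennett_log_mgf b s v = ln (b\<^sup>2 * exp (- (s / b) * v) + v * exp (s / b * b\<^sup>2)) - ln (b\<^sup>2 + v)"
proof -
  have "b\<^sup>2 / (b\<^sup>2 + v) * exp (- (v / b) * s) + v / (b\<^sup>2 + v) * exp (b * s)
      = (b\<^sup>2 * exp (- (s / b) * v) + v * exp (s / b * b\<^sup>2)) / (b\<^sup>2 + v)"
  proof -
    have "s / b * b\<^sup>2 = b * s" and "- (s / b) * v = - (v / b) * s"
      using b by (simp_all add: power2_eq_square)
    then show ?thesis
      by (simp add: add_divide_distrib)
  qed
  moreover have "0 < b\<^sup>2 * exp (- (s / b) * v) + v * exp (s / b * b\<^sup>2)" and "0 < b\<^sup>2 + v"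
    using b v by (auto intro: add_pos_nonneg)
  ultimately show ?thesis
    unfolding bennett_log_mgf_def by (simp add: ln_div)
qed

text \<open>The left-hand side is the second derivative of \<open>v \<mapsto> ln (b\<^sup>2 exp (- c v) + v exp (c b\<^sup>2)) - ln (b\<^sup>2 + v)\<close>.
  With \<open>t = c (b\<^sup>2 + v)\<close> and \<open>z = e\<^sup>t\<close> its numerator becomes a combination with nonnegative
  coefficients of \<open>2 z - t\<^sup>2 - 2 t - 2\<close> and \<open>z\<^sup>2 - 2 t z - 1\<close>, i.e. of the Taylor bound
  \<open>e\<^sup>t \<ge> 1 + t + t\<^sup>2/2\<close> and of \<open>sinh t \<ge> t\<close>.\<close>

lemma bennett_second_derivative_nonpos:
  fixes b c v :: real
  assumes b: "0 < b" and c: "0 < c" and v: "0 \<le> v"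
  defines "w \<equiv> exp (- c * v)" and "E \<equiv> exp (c * b\<^sup>2)"
  defines "p \<equiv> b\<^sup>2 * w + v * E"
  shows "(b\<^sup>2 * c\<^sup>2 * w * p - (E - b\<^sup>2 * c * w)\<^sup>2) / p\<^sup>2 + 1 / (b\<^sup>2 + v)\<^sup>2 \<le> 0"
proof -
  define T where "T = b\<^sup>2 + v"
  define t where "t = c * T"
  define z where "z = exp t"
  have T: "0 < T" and t: "0 \<le> t" and z: "0 < z"
    using b c v by (simp_all add: T_def t_def z_def add_pos_nonneg)
  have E: "E = z * w"
    by (simp add: E_def z_def w_def t_def T_def mult_exp_exp algebra_simps)
  have p: "p = w * (b\<^sup>2 + v * z)"
    by (simp add: p_def E algebra_simps)
  have p_pos: "0 < p"
    unfolding p_def w_def E_def using b v by (intro add_pos_nonneg) auto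
  have taylor: "0 \<le> 2 * z - t\<^sup>2 - 2 * t - 2"
    using exp_lower_Taylor_quadratic[OF t] by (simp add: z_def)
  have sinh: "0 \<le> z\<^sup>2 - 2 * t * z - 1"
    using real_le_x_sinh[OF t] z by (simp add: z_def[symmetric] exp_minus field_simps power2_eq_square)
  have "(z - b\<^sup>2 * c)\<^sup>2 * T\<^sup>2 - b\<^sup>2 * c\<^sup>2 * (b\<^sup>2 + v * z) * T\<^sup>2 - (b\<^sup>2 + v * z)\<^sup>2
      = b\<^sup>2 * v * z * (2 * z - t\<^sup>2 - 2 * t - 2) + b ^ 4 * (z\<^sup>2 - 2 * t * z - 1)"
    unfolding t_def T_def by (simp add: eval_nat_numeral algebra_simps)
  also have "0 \<le> \<dots>"
    using taylor sinh v z by (intro add_nonneg_nonneg mult_nonneg_nonneg) auto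
  finally have key: "0 \<le> (z - b\<^sup>2 * c)\<^sup>2 * T\<^sup>2 - b\<^sup>2 * c\<^sup>2 * (b\<^sup>2 + v * z) * T\<^sup>2 - (b\<^sup>2 + v * z)\<^sup>2" .
  have "(b\<^sup>2 * c\<^sup>2 * w * p - (E - b\<^sup>2 * c * w)\<^sup>2) / p\<^sup>2 + 1 / (b\<^sup>2 + v)\<^sup>2
      = ((b\<^sup>2 * c\<^sup>2 * w * p - (E - b\<^sup>2 * c * w)\<^sup>2) * T\<^sup>2 + p\<^sup>2) / (p\<^sup>2 * T\<^sup>2)"
    using p_pos T unfolding T_def by (simp add: field_simps)
  also have "\<dots> = - (w\<^sup>2 * ((z - b\<^sup>2 * c)\<^sup>2 * T\<^sup>2 - b\<^sup>2 * c\<^sup>2 * (b\<^sup>2 + v * z) * T\<^sup>2 - (b\<^sup>2 + v * z)\<^sup>2)) / (p\<^sup>2 * T\<^sup>2)"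
    unfolding p E by (simp add: power2_eq_square algebra_simps)
  also have "\<dots> \<le> 0"
    using key by (intro divide_nonpos_nonneg) auto
  finally show ?thesis .
qed

lemma concave_on_bennett_log_mgf:
  fixes b s :: real
  assumes b: "0 < b" and s: "0 < s"
  shows "concave_on {0..} (bennett_log_mgf b s)"
proof -
  define c where "c = s / b"
  define E where "E = exp (c * b\<^sup>2)"
  define g where "g v = ln (b\<^sup>2 * exp (- c * v) + v * E) - ln (b\<^sup>2 + v)" for v
  have c: "0 < c"
    using b s by (simp add: c_def)
  have pos: "0 < b\<^sup>2 * exp (- c * v) + v * E" "0 < b\<^sup>2 + v" if "0 \<le> v" for v
    using b that by (auto simp: E_def intro: add_pos_nonneg)
  have "concave_on {0..} g"
  proof (rule f''_le0_imp_concave)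
    fix v :: real
    assume "v \<in> {0..}"
    then have v: "0 \<le> v" by simp
    show "(g has_real_derivative
        (E - b\<^sup>2 * c * exp (- c * v)) / (b\<^sup>2 * exp (- c * v) + v * E) - 1 / (b\<^sup>2 + v)) (at v)"
      unfolding g_def using pos[OF v] by (auto intro!: derivative_eq_intros simp: algebra_simps)
    show "((\<lambda>v. (E - b\<^sup>2 * c * exp (- c * v)) / (b\<^sup>2 * exp (- c * v) + v * E) - 1 / (b\<^sup>2 + v))
        has_real_derivative
          (b\<^sup>2 * c\<^sup>2 * exp (- c * v) * (b\<^sup>2 * exp (- c * v) + v * E) - (E - b\<^sup>2 * c * exp (- c * v))\<^sup>2)
            / (b\<^sup>2 * exp (- c * v) + v * E)\<^sup>2 + 1 / (b\<^sup>2 + v)\<^sup>2) (at v)"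
      using pos[OF v] by (auto intro!: derivative_eq_intros simp: power2_eq_square field_simps)
    show "(b\<^sup>2 * c\<^sup>2 * exp (- c * v) * (b\<^sup>2 * exp (- c * v) + v * E) - (E - b\<^sup>2 * c * exp (- c * v))\<^sup>2)
            / (b\<^sup>2 * exp (- c * v) + v * E)\<^sup>2 + 1 / (b\<^sup>2 + v)\<^sup>2 \<le> 0"
      using bennett_second_derivative_nonpos[OF b c v] unfolding E_def .
  qed simp
  moreover have "bennett_log_mgf b s v = g v" if "0 \<le> v" for v
    using bennett_log_mgf_eq[OF b that] by (simp add: g_def c_def E_def)
  ultimately show ?thesis
    unfolding concave_on_iff by (auto intro!: add_nonneg_nonneg mult_nonneg_nonneg)
qed

lemma nu_nonneg: "0 \<le> nu \<sigma> n"
  unfolding nu_def by (intro divide_nonneg_nonneg sum_nonneg) auto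

lemma nu_Suc: "real (Suc k) * nu \<sigma> (Suc k) = real k * nu \<sigma> k + (\<sigma> (Suc k))\<^sup>2"
  unfolding nu_def by (cases "k = 0") simp_all

lemma VV_Suc_ge:
  fixes b s :: real
  assumes b: "0 < b" and s: "0 < s"
  shows "VV b \<sigma> s k + bennett_log_mgf b s ((\<sigma> (Suc k))\<^sup>2) \<le> VV b \<sigma> s (Suc k)"
proof -
  define t where "t = 1 / real (Suc k)"
  have t: "0 \<le> t" "t \<le> 1"
    by (simp_all add: t_def)
  have weights: "real (Suc k) * (1 - t) = real k" "real (Suc k) * t = 1"
    by (simp_all add: t_def field_simps)
  have "nu \<sigma> (Suc k) = (real k * nu \<sigma> k + (\<sigma> (Suc k))\<^sup>2) / real (Suc k)"
    using nu_Suc[of k \<sigma>] by (simp add: field_simps)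
  also have "\<dots> = (1 - t) * nu \<sigma> k + t * (\<sigma> (Suc k))\<^sup>2"
  proof -
    have "1 - t = real k * t"
      by (simp add: t_def field_simps)
    then show ?thesis
      by (simp add: t_def add_divide_distrib)
  qed
  finally have "(1 - t) * bennett_log_mgf b s (nu \<sigma> k) + t * bennett_log_mgf b s ((\<sigma> (Suc k))\<^sup>2)
      \<le> bennett_log_mgf b s (nu \<sigma> (Suc k))"
    using concave_onD[OF concave_on_bennett_log_mgf[OF b s] t] nu_nonneg by simp
  then have "real (Suc k) * ((1 - t) * bennett_log_mgf b s (nu \<sigma> k) + t * bennett_log_mgf b s ((\<sigma> (Suc k))\<^sup>2))
      \<le> real (Suc k) * bennett_log_mgf b s (nu \<sigma> (Suc k))"
    by (rule mult_left_mono) simp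
  then show ?thesis
    unfolding VV_eq_bennett_log_mgf distrib_left mult.assoc[symmetric] weights by simp
qed

section \<open>Ville's inequality for products of independent factors\<close>

lemma (in prob_space) nn_integral_indep_restrict_mult:
  fixes Z :: "'i \<Rightarrow> 'a \<Rightarrow> real" and f :: "('i \<Rightarrow> real) \<Rightarrow> ennreal"
  assumes indep: "indep_vars (\<lambda>_. borel) Z I" and J: "J \<subseteq> I" "k \<in> I" "k \<notin> J"
    and f: "f \<in> borel_measurable (PiM J (\<lambda>_. borel))"
  shows "(\<integral>\<^sup>+\<omega>. f (\<lambda>i\<in>J. Z i \<omega>) * ennreal (Z k \<omega>) \<partial>M)
    = (\<integral>\<^sup>+\<omega>. f (\<lambda>i\<in>J. Z i \<omega>) \<partial>M) * (\<integral>\<^sup>+\<omega>. ennreal (Z k \<omega>) \<partial>M)"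
proof -
  have "indep_var (PiM J (\<lambda>_. borel)) (\<lambda>\<omega>. \<lambda>i\<in>J. Z i \<omega>) (PiM {k} (\<lambda>_. borel)) (\<lambda>\<omega>. \<lambda>i\<in>{k}. Z i \<omega>)"
    using J by (intro indep_var_restrict[OF indep]) auto
  then have "indep_var borel (f \<circ> (\<lambda>\<omega>. \<lambda>i\<in>J. Z i \<omega>)) borel ((\<lambda>x. ennreal (x k)) \<circ> (\<lambda>\<omega>. \<lambda>i\<in>{k}. Z i \<omega>))"
    by (rule indep_var_compose) (use f in measurable)
  moreover have "case_bool borel borel = (\<lambda>_::bool. borel :: ennreal measure)"
    by (rule ext) (simp split: bool.split)
  ultimately have "indep_vars (\<lambda>_. borel) (case_bool (\<lambda>\<omega>. f (\<lambda>i\<in>J. Z i \<omega>)) (\<lambda>\<omega>. ennreal (Z k \<omega>))) UNIV"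
    by (simp add: indep_var_def comp_def)
  from indep_vars_nn_integral[OF _ this] show ?thesis
    by (simp add: UNIV_bool mult.commute)
qed

lemma (in prob_space) borel_measurable_indep_partial_prod:
  fixes Z :: "nat \<Rightarrow> 'a \<Rightarrow> real"
  assumes "indep_vars (\<lambda>_. borel) Z {1..}"
  shows "(\<lambda>\<omega>. \<Prod>i=1..n. Z i \<omega>) \<in> borel_measurable M"
  using assms by (intro borel_measurable_prod) (auto simp: indep_vars_def)

lemma (in prob_space) nn_integral_stopped_product_Suc_le:
  fixes Z :: "nat \<Rightarrow> 'a \<Rightarrow> real" and a :: real
  assumes indep: "indep_vars (\<lambda>_. borel) Z {1..}" and nonneg: "\<And>i \<omega>. 0 \<le> Z i \<omega>"
    and mean: "(\<integral>\<^sup>+\<omega>. ennreal (Z (Suc N) \<omega>) \<partial>M) \<le> 1"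
  shows "(\<integral>\<^sup>+\<omega>. ennreal (\<Prod>i=1..Suc N. Z i \<omega>) * of_bool (\<forall>n\<in>{1..N}. (\<Prod>i=1..n. Z i \<omega>) < a) \<partial>M)
    \<le> (\<integral>\<^sup>+\<omega>. ennreal (\<Prod>i=1..N. Z i \<omega>) * of_bool (\<forall>n\<in>{1..N}. (\<Prod>i=1..n. Z i \<omega>) < a) \<partial>M)"
proof -
  define f where "f x = ennreal (\<Prod>i=1..N. x i) * of_bool (\<forall>n\<in>{1..N}. (\<Prod>i=1..n. x i) < a)"
    for x :: "nat \<Rightarrow> real"
  have prod_meas: "(\<lambda>x. \<Prod>i=1..n. x i) \<in> borel_measurable (PiM {1..N} (\<lambda>_. borel :: real measure))" if "n \<le> N" for n
    using that by (intro borel_measurable_prod measurable_component_singleton) auto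
  have "Measurable.pred (PiM {1..N} (\<lambda>_. borel :: real measure)) (\<lambda>x. \<forall>n\<in>{1..N}. (\<Prod>i=1..n. x i) < a)"
    using prod_meas by (intro pred_intros_finite(3)) (auto intro: borel_measurable_less)
  moreover have "(\<lambda>x. ennreal (\<Prod>i=1..N. x i)) \<in> borel_measurable (PiM {1..N} (\<lambda>_. borel :: real measure))"
    using prod_meas[of N] by measurable
  ultimately have f_meas: "f \<in> borel_measurable (PiM {1..N} (\<lambda>_. borel :: real measure))"
    unfolding f_def by measurable
  have f_restrict: "f (\<lambda>i\<in>{1..N}. Z i \<omega>)
      = ennreal (\<Prod>i=1..N. Z i \<omega>) * of_bool (\<forall>n\<in>{1..N}. (\<Prod>i=1..n. Z i \<omega>) < a)" for \<omega>
  proof -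
    have "(\<Prod>i=1..n. (\<lambda>i\<in>{1..N}. Z i \<omega>) i) = (\<Prod>i=1..n. Z i \<omega>)" if "n \<le> N" for n
      using that by (intro prod.cong) auto
    then show ?thesis
      by (simp add: f_def)
  qed
  have "(\<integral>\<^sup>+\<omega>. ennreal (\<Prod>i=1..Suc N. Z i \<omega>) * of_bool (\<forall>n\<in>{1..N}. (\<Prod>i=1..n. Z i \<omega>) < a) \<partial>M)
      = (\<integral>\<^sup>+\<omega>. f (\<lambda>i\<in>{1..N}. Z i \<omega>) * ennreal (Z (Suc N) \<omega>) \<partial>M)"
    unfolding f_restrict
    by (intro nn_integral_cong) (simp add: ennreal_mult[symmetric] nonneg prod_nonneg mult_ac)
  also have "\<dots> = (\<integral>\<^sup>+\<omega>. f (\<lambda>i\<in>{1..N}. Z i \<omega>) \<partial>M) * (\<integral>\<^sup>+\<omega>. ennreal (Z (Suc N) \<omega>) \<partial>M)"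
    by (rule nn_integral_indep_restrict_mult[OF indep _ _ _ f_meas]) auto
  also have "\<dots> \<le> (\<integral>\<^sup>+\<omega>. f (\<lambda>i\<in>{1..N}. Z i \<omega>) \<partial>M)"
    using mult_left_mono[OF mean] by simp
  finally show ?thesis
    by (simp only: f_restrict)
qed

text \<open>The product stopped at its first crossing of \<open>a\<close> is a supermartingale, so
  \<open>a P(crossing by time N) + E[product at N; no crossing]\<close> does not increase with \<open>N\<close>.\<close>

lemma (in prob_space) ville_indep_product_step:
  fixes Z :: "nat \<Rightarrow> 'a \<Rightarrow> real" and a :: real
  assumes indep: "indep_vars (\<lambda>_. borel) Z {1..}" and nonneg: "\<And>i \<omega>. 0 \<le> Z i \<omega>"
    and mean: "(\<integral>\<^sup>+\<omega>. ennreal (Z (Suc N) \<omega>) \<partial>M) \<le> 1"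
  shows "ennreal a * emeasure M {\<omega> \<in> space M. \<exists>n\<in>{1..Suc N}. a \<le> (\<Prod>i=1..n. Z i \<omega>)}
      + (\<integral>\<^sup>+\<omega>. ennreal (\<Prod>i=1..Suc N. Z i \<omega>) * of_bool (\<forall>n\<in>{1..Suc N}. (\<Prod>i=1..n. Z i \<omega>) < a) \<partial>M)
    \<le> ennreal a * emeasure M {\<omega> \<in> space M. \<exists>n\<in>{1..N}. a \<le> (\<Prod>i=1..n. Z i \<omega>)}
      + (\<integral>\<^sup>+\<omega>. ennreal (\<Prod>i=1..N. Z i \<omega>) * of_bool (\<forall>n\<in>{1..N}. (\<Prod>i=1..n. Z i \<omega>) < a) \<partial>M)"
proof -
  note [measurable] = borel_measurable_indep_partial_prod[OF indep]
  define P where "P n \<omega> = (\<Prod>i=1..n. Z i \<omega>)" for n \<omega>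
  define below where "below n \<omega> \<longleftrightarrow> (\<forall>n'\<in>{1..n}. P n' \<omega> < a)" for n \<omega>
  define E where "E n = {\<omega> \<in> space M. \<exists>n'\<in>{1..n}. a \<le> P n' \<omega>}" for n
  define A where "A = {\<omega> \<in> space M. below N \<omega> \<and> a \<le> P (Suc N) \<omega>}"
  have [measurable]: "P n \<in> borel_measurable M" for n
    unfolding P_def by measurable
  have [measurable]: "Measurable.pred M (below n)" for n
    unfolding below_def by measurable
  have below_Suc: "below (Suc N) \<omega> \<longleftrightarrow> below N \<omega> \<and> P (Suc N) \<omega> < a" for \<omega>
    by (auto simp: below_def atLeastAtMostSuc_conv)
  have "E (Suc N) = E N \<union> A" and "E N \<inter> A = {}"
    by (auto simp: E_def A_def below_def atLeastAtMostSuc_conv not_less)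
  then have "emeasure M (E (Suc N)) = emeasure M (E N) + emeasure M A"
    by (simp add: plus_emeasure E_def A_def)
  moreover have "ennreal a * emeasure M A + (\<integral>\<^sup>+\<omega>. ennreal (P (Suc N) \<omega>) * of_bool (below (Suc N) \<omega>) \<partial>M)
      = (\<integral>\<^sup>+\<omega>. ennreal a * indicator A \<omega> + ennreal (P (Suc N) \<omega>) * of_bool (below (Suc N) \<omega>) \<partial>M)"
    by (simp add: nn_integral_add nn_integral_cmult_indicator A_def)
  moreover have "\<dots> \<le> (\<integral>\<^sup>+\<omega>. ennreal (P (Suc N) \<omega>) * of_bool (below N \<omega>) \<partial>M)"
    by (intro nn_integral_mono) (auto simp: A_def below_Suc indicator_def intro: ennreal_leI)
  moreover have "\<dots> \<le> (\<integral>\<^sup>+\<omega>. ennreal (P N \<omega>) * of_bool (below N \<omega>) \<partial>M)"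
    unfolding P_def below_def by (rule nn_integral_stopped_product_Suc_le[OF indep nonneg mean])
  ultimately have "ennreal a * emeasure M (E (Suc N)) + (\<integral>\<^sup>+\<omega>. ennreal (P (Suc N) \<omega>) * of_bool (below (Suc N) \<omega>) \<partial>M)
      \<le> ennreal a * emeasure M (E N) + (\<integral>\<^sup>+\<omega>. ennreal (P N \<omega>) * of_bool (below N \<omega>) \<partial>M)"
    by (simp add: distrib_left add.assoc add_left_mono order_trans)
  then show ?thesis
    by (simp add: E_def P_def below_def)
qed

lemma (in prob_space) ville_indep_product_finite:
  fixes Z :: "nat \<Rightarrow> 'a \<Rightarrow> real" and a :: real
  assumes indep: "indep_vars (\<lambda>_. borel) Z {1..}" and nonneg: "\<And>i \<omega>. 0 \<le> Z i \<omega>"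
    and mean: "\<And>i. 1 \<le> i \<Longrightarrow> (\<integral>\<^sup>+\<omega>. ennreal (Z i \<omega>) \<partial>M) \<le> 1"
  shows "ennreal a * emeasure M {\<omega> \<in> space M. \<exists>n\<in>{1..N}. a \<le> (\<Prod>i=1..n. Z i \<omega>)}
    + (\<integral>\<^sup>+\<omega>. ennreal (\<Prod>i=1..N. Z i \<omega>) * of_bool (\<forall>n\<in>{1..N}. (\<Prod>i=1..n. Z i \<omega>) < a) \<partial>M) \<le> 1"
proof (induction N)
  case 0
  show ?case
    by (simp add: emeasure_space_1)
next
  case (Suc N)
  with ville_indep_product_step[OF indep nonneg mean] show ?case
    by (rule order_trans) simp
qed

lemma (in prob_space) ville_indep_product:
  fixes Z :: "nat \<Rightarrow> 'a \<Rightarrow> real" and a :: real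
  assumes indep: "indep_vars (\<lambda>_. borel) Z {1..}" and nonneg: "\<And>i \<omega>. 0 \<le> Z i \<omega>"
    and mean: "\<And>i. 1 \<le> i \<Longrightarrow> (\<integral>\<^sup>+\<omega>. ennreal (Z i \<omega>) \<partial>M) \<le> 1"
    and a: "0 < a"
  shows "prob {\<omega> \<in> space M. \<exists>n\<ge>1. a \<le> (\<Prod>i=1..n. Z i \<omega>)} \<le> 1 / a"
proof -
  note [measurable] = borel_measurable_indep_partial_prod[OF indep]
  define E where "E N = {\<omega> \<in> space M. \<exists>n\<in>{1..N}. a \<le> (\<Prod>i=1..n. Z i \<omega>)}" for N
  have "E N \<in> sets M" for N
    unfolding E_def by measurable
  then have E_sets: "range E \<subseteq> sets M"
    by auto
  have "incseq E"
    by (rule monoI) (force simp: E_def)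
  then have "(\<lambda>N. prob (E N)) \<longlonglongrightarrow> prob (\<Union>N. E N)"
    using E_sets by (rule finite_Lim_measure_incseq[rotated])
  moreover have "prob (E N) \<le> 1 / a" for N
  proof -
    have "ennreal a * emeasure M (E N) \<le> 1"
      using ville_indep_product_finite[OF indep nonneg mean, of a N]
      unfolding E_def[symmetric] by (auto elim: order_trans[rotated])
    then have "a * prob (E N) \<le> 1"
      using a by (simp add: emeasure_eq_measure ennreal_mult[symmetric] ennreal_le_1)
    then show ?thesis
      using a by (simp add: field_simps)
  qed
  ultimately have "prob (\<Union>N. E N) \<le> 1 / a"
    by (intro LIMSEQ_le_const2) auto
  moreover have "(\<Union>N. E N) = {\<omega> \<in> space M. \<exists>n\<ge>1. a \<le> (\<Prod>i=1..n. Z i \<omega>)}"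
    by (auto simp: E_def) (metis atLeastAtMost_iff order_refl)
  ultimately show ?thesis
    by simp
qed

lemma (in prob_space) ville_exp_partial_sums:
  fixes X :: "nat \<Rightarrow> 'a \<Rightarrow> real" and V :: "nat \<Rightarrow> real" and s c :: real
  assumes indep: "indep_vars (\<lambda>_. borel) X {1..}" and V0: "V 0 = 0"
    and mgf: "\<And>k. (\<integral>\<^sup>+\<omega>. ennreal (exp (s * X (Suc k) \<omega>)) \<partial>M) \<le> ennreal (exp (V (Suc k) - V k))"
    and c: "0 < c"
  shows "prob {\<omega> \<in> space M. \<exists>n\<ge>1. c \<le> exp (s * (\<Sum>i=1..n. X i \<omega>) - V n)} \<le> 1 / c"
proof -
  define Z where "Z i \<omega> = exp (s * X i \<omega> - (V i - V (i - 1)))" for i \<omega>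
  have Z_indep: "indep_vars (\<lambda>_. borel) Z {1..}"
    unfolding Z_def by (rule indep_vars_compose2[OF indep]) measurable
  have Z_mean: "(\<integral>\<^sup>+\<omega>. ennreal (Z i \<omega>) \<partial>M) \<le> 1" if "1 \<le> i" for i
  proof -
    obtain k where i: "i = Suc k"
      using \<open>1 \<le> i\<close> by (cases i) auto
    have [measurable]: "X (Suc k) \<in> borel_measurable M"
      using indep by (auto simp: indep_vars_def)
    have "(\<integral>\<^sup>+\<omega>. ennreal (Z i \<omega>) \<partial>M)
        = (\<integral>\<^sup>+\<omega>. ennreal (exp (s * X (Suc k) \<omega>)) * ennreal (exp (- (V (Suc k) - V k))) \<partial>M)"
      by (simp add: Z_def i ennreal_mult[symmetric] mult_exp_exp algebra_simps)
    also have "\<dots> = (\<integral>\<^sup>+\<omega>. ennreal (exp (s * X (Suc k) \<omega>)) \<partial>M) * ennreal (exp (- (V (Suc k) - V k)))"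
      by (rule nn_integral_multc) measurable
    also have "\<dots> \<le> ennreal (exp (V (Suc k) - V k)) * ennreal (exp (- (V (Suc k) - V k)))"
      by (intro mult_right_mono mgf) simp
    also have "\<dots> = 1"
      by (simp add: ennreal_mult[symmetric] mult_exp_exp)
    finally show ?thesis .
  qed
  have "(\<Prod>i=1..n. Z i \<omega>) = exp (s * (\<Sum>i=1..n. X i \<omega>) - V n)" for n \<omega>
    by (induction n) (simp_all add: Z_def V0 mult_exp_exp algebra_simps)
  with ville_indep_product[OF Z_indep _ Z_mean c] show ?thesis
    by (simp add: Z_def)
qed

lemma (in prob_space) ville_exp_partial_sums_SUP:
  fixes X :: "nat \<Rightarrow> 'a \<Rightarrow> real" and V :: "nat \<Rightarrow> real" and s \<theta> :: real
  assumes indep: "indep_vars (\<lambda>_. borel) X {1..}" and V0: "V 0 = 0"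
    and mgf: "\<And>k. (\<integral>\<^sup>+\<omega>. ennreal (exp (s * X (Suc k) \<omega>)) \<partial>M) \<le> ennreal (exp (V (Suc k) - V k))"
  shows "prob {\<omega> \<in> space M. 0 \<le> (SUP n\<in>{1..}. ereal (s * (\<Sum>i=1..n. X i \<omega>) - V n - \<theta>))} \<le> exp (- \<theta>)"
proof (rule field_le_mult_one_interval)
  fix z :: real
  assume z: "0 < z" "z < 1"
  have [measurable]: "(\<lambda>\<omega>. \<Sum>i=1..n. X i \<omega>) \<in> borel_measurable M" for n
    using indep by (intro borel_measurable_sum) (auto simp: indep_vars_def)
  have "{\<omega> \<in> space M. 0 \<le> (SUP n\<in>{1..}. ereal (s * (\<Sum>i=1..n. X i \<omega>) - V n - \<theta>))}
      \<subseteq> {\<omega> \<in> space M. \<exists>n\<ge>1. z * exp \<theta> \<le> exp (s * (\<Sum>i=1..n. X i \<omega>) - V n)}"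
  proof safe
    fix \<omega>
    assume "\<omega> \<in> space M" and sup: "0 \<le> (SUP n\<in>{1..}. ereal (s * (\<Sum>i=1..n. X i \<omega>) - V n - \<theta>))"
    have "ereal (ln z) < 0"
      using z by simp
    then have "ereal (ln z) < (SUP n\<in>{1..}. ereal (s * (\<Sum>i=1..n. X i \<omega>) - V n - \<theta>))"
      using sup by (rule order.strict_trans2)
    then obtain n where "1 \<le> n" and "ln z < s * (\<Sum>i=1..n. X i \<omega>) - V n - \<theta>"
      by (auto simp: less_SUP_iff)
    moreover have "z * exp \<theta> = exp (ln z + \<theta>)"
      using z by (simp add: exp_add)
    ultimately show "\<exists>n\<ge>1. z * exp \<theta> \<le> exp (s * (\<Sum>i=1..n. X i \<omega>) - V n)"
      by auto
  qed
  then have "prob {\<omega> \<in> space M. 0 \<le> (SUP n\<in>{1..}. ereal (s * (\<Sum>i=1..n. X i \<omega>) - V n - \<theta>))}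
      \<le> prob {\<omega> \<in> space M. \<exists>n\<ge>1. z * exp \<theta> \<le> exp (s * (\<Sum>i=1..n. X i \<omega>) - V n)}"
    by (rule finite_measure_mono) measurable
  also have "\<dots> \<le> 1 / (z * exp \<theta>)"
    using z by (intro ville_exp_partial_sums[OF indep V0 mgf]) simp
  finally show "z * prob {\<omega> \<in> space M. 0 \<le> (SUP n\<in>{1..}. ereal (s * (\<Sum>i=1..n. X i \<omega>) - V n - \<theta>))}
      \<le> exp (- \<theta>)"
    using z by (simp add: field_simps exp_minus)
qed

section \<open>The optimal exponent\<close>

lemma bennett_zeta_pos:
  fixes b \<nu> \<epsilon> :: real
  assumes b: "0 < b" and \<nu>: "0 < \<nu>" and \<epsilon>: "0 < \<epsilon>" "\<epsilon> < b"
  shows "0 < b / (b\<^sup>2 + \<nu>) * ln ((1 + \<epsilon> * b / \<nu>) / (1 - \<epsilon> / b))"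
proof -
  have "0 < \<epsilon> * b / \<nu>" and "0 < \<epsilon> / b" and "\<epsilon> / b < 1"
    using b \<nu> \<epsilon> by simp_all
  then have "1 < (1 + \<epsilon> * b / \<nu>) / (1 - \<epsilon> / b)"
    by (subst less_divide_eq_1_pos) simp_all
  then show ?thesis
    using b \<nu> by (simp add: add_pos_pos)
qed

lemma bennett_log_mgf_at_zeta:
  fixes b \<nu> \<epsilon> :: real
  assumes b: "0 < b" and \<nu>: "0 < \<nu>" and \<epsilon>: "0 < \<epsilon>" "\<epsilon> < b"
  defines "\<zeta> \<equiv> b / (b\<^sup>2 + \<nu>) * ln ((1 + \<epsilon> * b / \<nu>) / (1 - \<epsilon> / b))"
  shows "bennett_log_mgf b \<zeta> \<nu> = - (\<nu> / b) * \<zeta> - ln (1 - \<epsilon> / b)"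
proof -
  define \<alpha> where "\<alpha> = 1 + \<epsilon> * b / \<nu>"
  define \<beta> where "\<beta> = 1 - \<epsilon> / b"
  have "0 < \<epsilon> * b / \<nu>"
    using b \<nu> \<epsilon> by simp
  then have \<alpha>: "0 < \<alpha>" and \<beta>: "0 < \<beta>"
    using b \<epsilon> by (simp_all add: \<alpha>_def \<beta>_def)
  define T where "T = b\<^sup>2 + \<nu>"
  have T: "0 < T"
    using b \<nu> by (simp add: T_def add_pos_pos)
  have "b * \<zeta> + (\<nu> / b) * \<zeta> = (b\<^sup>2 + \<nu>) * \<zeta> / b"
    using b by (simp add: field_simps power2_eq_square)
  also have "\<dots> = ln (\<alpha> / \<beta>)"
    using b T unfolding \<zeta>_def \<alpha>_def[symmetric] \<beta>_def[symmetric] T_def[symmetric] by simp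
  finally have "b * \<zeta> = ln (\<alpha> / \<beta>) + - (\<nu> / b) * \<zeta>"
    by simp
  then have "exp (b * \<zeta>) = exp (ln (\<alpha> / \<beta>)) * exp (- (\<nu> / b) * \<zeta>)"
    by (simp only: exp_add[symmetric])
  then have exp_b\<zeta>: "exp (b * \<zeta>) = \<alpha> / \<beta> * exp (- (\<nu> / b) * \<zeta>)"
    using \<alpha> \<beta> by simp
  have "b\<^sup>2 / T * exp (- (\<nu> / b) * \<zeta>) + \<nu> / T * exp (b * \<zeta>)
      = (b\<^sup>2 + \<nu> * (\<alpha> / \<beta>)) / T * exp (- (\<nu> / b) * \<zeta>)"
    unfolding exp_b\<zeta> by (simp add: add_divide_distrib algebra_simps)
  also have "b\<^sup>2 + \<nu> * (\<alpha> / \<beta>) = T / \<beta>"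
    using b \<nu> \<epsilon> unfolding \<alpha>_def \<beta>_def T_def by (simp add: field_simps power2_eq_square)
  finally have "b\<^sup>2 / T * exp (- (\<nu> / b) * \<zeta>) + \<nu> / T * exp (b * \<zeta>) = exp (- (\<nu> / b) * \<zeta>) / \<beta>"
    using T by simp
  then have "bennett_log_mgf b \<zeta> \<nu> = ln (exp (- (\<nu> / b) * \<zeta>) / \<beta>)"
    by (simp add: bennett_log_mgf_def T_def)
  then show ?thesis
    unfolding \<beta>_def[symmetric] using \<beta> by (simp add: ln_div)
qed

lemma bennett_chernoff_closed_form:
  fixes b \<nu> \<epsilon> :: real and m :: nat
  assumes b: "0 < b" and \<nu>: "0 < \<nu>" and \<epsilon>: "0 < \<epsilon>" "\<epsilon> < b"
  defines "\<zeta> \<equiv> b / (b\<^sup>2 + \<nu>) * ln ((1 + \<epsilon> * b / \<nu>) / (1 - \<epsilon> / b))"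
  shows "exp (real m * (bennett_log_mgf b \<zeta> \<nu> - \<zeta> * \<epsilon>))
    = ((1 + b * \<epsilon> / \<nu>) powr (- (\<nu> + b * \<epsilon>) / (b\<^sup>2 + \<nu>))
       * (1 - \<epsilon> / b) powr (- (b\<^sup>2 - b * \<epsilon>) / (b\<^sup>2 + \<nu>))) ^ m"
proof -
  define \<alpha> where "\<alpha> = 1 + \<epsilon> * b / \<nu>"
  define \<beta> where "\<beta> = 1 - \<epsilon> / b"
  define T where "T = b\<^sup>2 + \<nu>"
  have "0 < \<epsilon> * b / \<nu>"
    using b \<nu> \<epsilon> by simp
  then have \<alpha>: "0 < \<alpha>" and \<beta>: "0 < \<beta>" and T: "0 < T"
    using b \<nu> \<epsilon> by (simp_all add: \<alpha>_def \<beta>_def T_def add_pos_pos)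
  have \<zeta>: "\<zeta> = b / T * (ln \<alpha> - ln \<beta>)"
    using \<alpha> \<beta> unfolding \<zeta>_def T_def[symmetric] \<alpha>_def[symmetric] \<beta>_def[symmetric] by (simp add: ln_div)
  have "bennett_log_mgf b \<zeta> \<nu> - \<zeta> * \<epsilon> = - (\<nu> / b) * \<zeta> - ln \<beta> - \<zeta> * \<epsilon>"
    using bennett_log_mgf_at_zeta[OF b \<nu> \<epsilon>] unfolding \<zeta>_def \<beta>_def by simp
  also have "\<dots> = - (\<nu> + b * \<epsilon>) / T * (ln \<alpha> - ln \<beta>) - ln \<beta>"
    using b T unfolding \<zeta> by (simp add: field_simps)
  also have "\<dots> = - (\<nu> + b * \<epsilon>) / T * ln \<alpha> + - (b\<^sup>2 - b * \<epsilon>) / T * ln \<beta>"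
    using T by (simp add: field_simps) (simp add: T_def algebra_simps)
  finally have "exp (bennett_log_mgf b \<zeta> \<nu> - \<zeta> * \<epsilon>)
      = \<alpha> powr (- (\<nu> + b * \<epsilon>) / T) * \<beta> powr (- (b\<^sup>2 - b * \<epsilon>) / T)"
    using \<alpha> \<beta> by (simp add: powr_def exp_add)
  moreover have "1 + b * \<epsilon> / \<nu> = \<alpha>"
    by (simp add: \<alpha>_def mult.commute)
  ultimately show ?thesis
    unfolding \<beta>_def T_def by (simp add: exp_of_nat_mult)
qed

theorem theorem16:
  fixes M :: "'a measure" and X :: "nat \<Rightarrow> 'a \<Rightarrow> real"
    and \<sigma> :: "nat \<Rightarrow> real" and b \<epsilon> :: real and m :: nat
  assumes "prob_space M"
    and "b > 0"
    and "\<And>i. i \<ge> 1 \<Longrightarrow> X i \<in> borel_measurable M"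
    and "prob_space.indep_vars M (\<lambda>_. borel) X {1..}"
    and "\<And>i. i \<ge> 1 \<Longrightarrow> integrable M (X i)"
    and "\<And>i. i \<ge> 1 \<Longrightarrow> prob_space.expectation M (X i) = 0"
    and "\<And>i. i \<ge> 1 \<Longrightarrow> (\<integral>\<^sup>+ x. ennreal (\<bar>X i x\<bar>\<^sup>2) \<partial>M) \<le> ennreal ((\<sigma> i)\<^sup>2)"
    and "\<And>i. i \<ge> 1 \<Longrightarrow> AE x in M. X i x \<le> b"
    and "m \<ge> 1"
    and "nu \<sigma> m > 0"
    and "0 < \<epsilon>" and "\<epsilon> < b"
  shows "let \<zeta> = b / (b\<^sup>2 + nu \<sigma> m) * ln ((1 + \<epsilon> * b / nu \<sigma> m) / (1 - \<epsilon> / b)) in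
     measure M {x \<in> space M.
        (SUP n\<in>{1..}. ereal (\<zeta> * ((\<Sum>i=1..n. X i x) - real m * \<epsilon>) - VV b \<sigma> \<zeta> n + VV b \<sigma> \<zeta> m)) \<ge> 0}
     \<le> ((1 + b * \<epsilon> / nu \<sigma> m) powr (- (nu \<sigma> m + b * \<epsilon>) / (b\<^sup>2 + nu \<sigma> m))
         * (1 - \<epsilon> / b) powr (- (b\<^sup>2 - b * \<epsilon>) / (b\<^sup>2 + nu \<sigma> m))) ^ m"
proof -
  interpret prob_space M by fact
  define \<nu> where "\<nu> = nu \<sigma> m"
  define \<zeta> where "\<zeta> = b / (b\<^sup>2 + \<nu>) * ln ((1 + \<epsilon> * b / \<nu>) / (1 - \<epsilon> / b))"
  define \<theta> where "\<theta> = \<zeta> * real m * \<epsilon> - VV b \<sigma> \<zeta> m"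
  have \<zeta>: "0 < \<zeta>"
    unfolding \<zeta>_def \<nu>_def using assms by (intro bennett_zeta_pos) auto
  have mgf: "(\<integral>\<^sup>+\<omega>. ennreal (exp (\<zeta> * X (Suc k) \<omega>)) \<partial>M) \<le> ennreal (exp (VV b \<sigma> \<zeta> (Suc k) - VV b \<sigma> \<zeta> k))"
    for k
  proof -
    have "(\<integral>\<^sup>+\<omega>. ennreal (exp (\<zeta> * X (Suc k) \<omega>)) \<partial>M) \<le> ennreal (exp (bennett_log_mgf b \<zeta> ((\<sigma> (Suc k))\<^sup>2)))"
      using assms \<zeta> by (intro nn_integral_exp_le_bennett) auto
    also have "\<dots> \<le> ennreal (exp (VV b \<sigma> \<zeta> (Suc k) - VV b \<sigma> \<zeta> k))"
      using VV_Suc_ge[OF \<open>0 < b\<close> \<zeta>, of \<sigma> k] by (intro ennreal_leI) simp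
    finally show ?thesis .
  qed
  have ville: "prob {\<omega> \<in> space M. 0 \<le> (SUP n\<in>{1..}. ereal (\<zeta> * (\<Sum>i=1..n. X i \<omega>) - VV b \<sigma> \<zeta> n - \<theta>))}
      \<le> exp (- \<theta>)"
    by (rule ville_exp_partial_sums_SUP[OF assms(4) _ mgf]) (simp add: VV_def)
  have shift: "\<zeta> * ((\<Sum>i=1..n. X i \<omega>) - real m * \<epsilon>) - VV b \<sigma> \<zeta> n + VV b \<sigma> \<zeta> m
      = \<zeta> * (\<Sum>i=1..n. X i \<omega>) - VV b \<sigma> \<zeta> n - \<theta>" for n \<omega>
    by (simp add: \<theta>_def algebra_simps)
  have closed_form: "exp (- \<theta>)
      = ((1 + b * \<epsilon> / \<nu>) powr (- (\<nu> + b * \<epsilon>) / (b\<^sup>2 + \<nu>))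
         * (1 - \<epsilon> / b) powr (- (b\<^sup>2 - b * \<epsilon>) / (b\<^sup>2 + \<nu>))) ^ m"
    unfolding \<theta>_def VV_eq_bennett_log_mgf \<nu>_def[symmetric] \<zeta>_def
    using assms by (subst bennett_chernoff_closed_form[symmetric]) (auto simp: \<nu>_def algebra_simps)
  show ?thesis
    unfolding Let_def \<nu>_def[symmetric] \<zeta>_def[symmetric] shift closed_form[symmetric] by (rule ville)
qed

end
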